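(* For every integer $k\ge 2$ and every $h>k/(2k-1)$ there is an instance with $k$ groups of binary agents in which no allocation is $h$-democratic positive-MMS-fair.
   Context: There is a finite set $G$ of goods and $k$ groups $A_1,\dots,A_k$ with $n_i\ge1$ agents in $A_i$. A binary agent has an additive utility with $u_a(\{g\})\in\{0,1\}$. An allocation is a partition $(G_1,\dots,G_k)$ of $G$; agents of $A_i$ get $u_a(G_i)$. $\mathrm{MMS}^k_a(G)$ is the maximum over partitions of $G$ into $k$ sets of the minimum of $u_a$ over those sets. The allocation is positive-MMS-fair for $a\in A_i$ if $\mathrm{MMS}^k_a(G)>0$ implies $u_a(G_i)>0$. An allocation is $h$-democratic fair if for each $i$ at least $h\cdot n_i$ agents of $A_i$ find it fair. *)

theory Defs
  imports Complex_Main
begin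

text \<open>Groups are indexed 0..k-1;
group i has agents 0..n i - 1. A binary agent (i,j) has utility u i j :: nat => bool,
u i j g meaning u_a({g}) = 1. Additive utility of a bundle S is the number of liked goods.\<close>

definition bval :: "(nat \<Rightarrow> bool) \<Rightarrow> nat set \<Rightarrow> nat" where
  "bval v S = card {g \<in> S. v g}"

text \<open>An allocation / partition of G into k (possibly empty) labelled sets is encoded
by a map p assigning to each good of G a label below k; part i is {g in G. p g = i}.\<close>

definition is_partition :: "nat \<Rightarrow> nat set \<Rightarrow> (nat \<Rightarrow> nat) \<Rightarrow> bool" where
  "is_partition k G p \<longleftrightarrow> (\<forall>g\<in>G. p g < k)"

definition part :: "nat set \<Rightarrow> (nat \<Rightarrow> nat) \<Rightarrow> nat \<Rightarrow> nat set" where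
  "part G p i = {g \<in> G. p g = i}"

definition mms :: "nat \<Rightarrow> (nat \<Rightarrow> bool) \<Rightarrow> nat set \<Rightarrow> nat" where
  "mms k v G = Max {Min {bval v (part G p i) | i. i < k} | p. is_partition k G p}"

definition pos_mms_fair :: "nat \<Rightarrow> nat set \<Rightarrow> (nat \<Rightarrow> bool) \<Rightarrow> (nat \<Rightarrow> nat) \<Rightarrow> nat \<Rightarrow> bool" where
  "pos_mms_fair k G v p i \<longleftrightarrow> (mms k v G > 0 \<longrightarrow> bval v (part G p i) > 0)"

definition democratic_fair ::
  "real \<Rightarrow> nat \<Rightarrow> nat set \<Rightarrow> (nat \<Rightarrow> nat) \<Rightarrow> (nat \<Rightarrow> nat \<Rightarrow> nat \<Rightarrow> bool) \<Rightarrow> (nat \<Rightarrow> nat) \<Rightarrow> bool" where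
  "democratic_fair h k G n u p \<longleftrightarrow>
     (\<forall>i<k. real (card {j. j < n i \<and> pos_mms_fair k G (u i j) p i}) \<ge> h * real (n i))"

end

theory Submission
  imports Defs
begin

text \<open>Take \<open>m = 2k - 1\<close> goods arranged on a cycle and, in every group, \<open>m\<close> agents, agent \<open>j\<close>
liking the \<open>k\<close> consecutive goods starting at \<open>j\<close>. Every agent likes \<open>k\<close> goods, so its maximin
share is positive, and every good is liked by only \<open>k\<close> agents. Since \<open>m < 2k\<close>, any allocation
gives some group at most one good \<open>g\<close>; the agents of that group who find the allocation fair
all like \<open>g\<close>, so there are at most \<open>k < h m\<close> of them.\<close>

lemma bval_pos_iff: "finite S \<Longrightarrow> 0 < bval v S \<longleftrightarrow> (\<exists>g\<in>S. v g)"
  unfolding bval_def by (auto simp: card_gt_0_iff)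

lemma bval_part_le_card: "finite G \<Longrightarrow> bval v (part G p i) \<le> card G"
  unfolding bval_def part_def by (intro card_mono) auto

lemma finite_part: "finite G \<Longrightarrow> finite (part G p i)"
  unfolding part_def by simp

lemma card_eq_sum_card_parts:
  assumes "finite G" and "is_partition k G p"
  shows "card G = (\<Sum>i<k. card (part G p i))"
proof -
  have "G = (\<Union>i<k. part G p i)"
    using assms(2) unfolding is_partition_def part_def by auto
  then have "card G = card (\<Union>i<k. part G p i)"
    by simp
  also have "\<dots> = (\<Sum>i<k. card (part G p i))"
    using assms(1) by (intro card_UN_disjoint) (auto simp: finite_part part_def)
  finally show ?thesis .
qed

lemma partition_has_small_part:
  assumes "finite G" and "is_partition k G p" and "card G < 2 * k"
  obtains i g where "i < k" and "part G p i \<subseteq> {g}"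
proof -
  have "\<exists>i<k. card (part G p i) \<le> 1"
  proof (rule ccontr)
    assume "\<not> ?thesis"
    then have "(\<Sum>i<k. 2) \<le> (\<Sum>i<k. card (part G p i))"
      by (intro sum_mono) auto
    with assms show False
      by (simp add: card_eq_sum_card_parts)
  qed
  then obtain i where "i < k" and "card (part G p i) \<le> Suc 0"
    by auto
  then show ?thesis
    using that card_le_Suc0_iff_eq[OF finite_part[OF assms(1)]] by blast
qed

lemma mms_ge_of_partition:
  assumes "finite G" and "1 \<le> k" and "is_partition k G p"
    and "\<And>i. i < k \<Longrightarrow> c \<le> bval v (part G p i)"
  shows "c \<le> mms k v G"
proof -
  let ?min = "\<lambda>q. Min {bval v (part G q i) | i. i < k}"
  have bundle_values: "finite {bval v (part G q i) | i. i < k}" "{bval v (part G q i) | i. i < k} \<noteq> {}"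
    for q
    using assms(2) by (auto intro!: exI[of _ 0])
  have "?min q \<le> card G" for q
    using Min_in[OF bundle_values[of q]] bval_part_le_card[OF assms(1), of v q] by auto
  then have "{?min q | q. is_partition k G q} \<subseteq> {..card G}"
    by blast
  then have "finite {?min q | q. is_partition k G q}"
    by (rule finite_subset) simp
  moreover have "?min p \<in> {?min q | q. is_partition k G q}"
    using assms(3) by blast
  ultimately have "?min p \<le> mms k v G"
    unfolding mms_def by (rule Max_ge)
  moreover have "c \<le> ?min p"
    using bundle_values assms(4) by (auto intro: Min.boundedI)
  ultimately show ?thesis
    by linarith
qed

text \<open>The partition witnessing this sends \<open>k\<close> liked goods to distinct parts.\<close>

lemma mms_pos_of_k_liked:
  assumes G: "finite G" and k: "1 \<le> k" and liked: "k \<le> bval v G"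
  shows "0 < mms k v G"
proof -
  obtain S where S: "S \<subseteq> {g \<in> G. v g}" "card S = k" "finite S"
    using liked unfolding bval_def by (rule obtain_subset_with_card_n)
  obtain f where f: "bij_betw f S {..<k}"
    using ex_bij_betw_finite_nat[OF \<open>finite S\<close>] S(2) atLeast0LessThan by auto
  define p where "p g = (if g \<in> S then f g else 0)" for g
  have p: "is_partition k G p"
    unfolding is_partition_def p_def using k bij_betwE[OF f] by auto
  have "1 \<le> bval v (part G p i)" if "i < k" for i
  proof -
    have "inv_into S f i \<in> S" and "f (inv_into S f i) = i"
      using that f by (auto simp: bij_betw_def inv_into_into f_inv_into_f)
    then have "inv_into S f i \<in> part G p i" and "v (inv_into S f i)"
      using S(1) unfolding part_def p_def by auto
    then have "0 < bval v (part G p i)"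
      using G by (auto simp: bval_pos_iff finite_part)
    then show ?thesis
      by simp
  qed
  with G k p have "1 \<le> mms k v G"
    by (rule mms_ge_of_partition)
  then show ?thesis
    by simp
qed

lemma fair_agents_like_only_good:
  assumes "finite G" and "part G p i \<subseteq> {g}" and "\<And>j. j < n \<Longrightarrow> 0 < mms k (v j) G"
  shows "{j. j < n \<and> pos_mms_fair k G (v j) p i} \<subseteq> {j. j < n \<and> v j g}"
proof
  fix j
  assume "j \<in> {j. j < n \<and> pos_mms_fair k G (v j) p i}"
  then have "j < n" and "0 < bval (v j) (part G p i)"
    using assms(3) unfolding pos_mms_fair_def by auto
  then show "j \<in> {j. j < n \<and> v j g}"
    using assms(1,2) by (auto simp: bval_pos_iff finite_part)
qed

definition cyclic_window :: "nat \<Rightarrow> nat \<Rightarrow> nat \<Rightarrow> nat set" where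
  "cyclic_window m k j = (\<lambda>d. (j + d) mod m) ` {..<k}"

lemma cyclic_window_subset: "0 < m \<Longrightarrow> cyclic_window m k j \<subseteq> {..<m}"
  unfolding cyclic_window_def by auto

lemma card_cyclic_window:
  assumes "k \<le> m" and "j < m"
  shows "card (cyclic_window m k j) = k"
proof -
  have recover: "x = ((j + x) mod m + (m - j)) mod m" if "x < m" for x
  proof -
    have "x = (j + x + (m - j)) mod m"
      using that assms(2) by simp
    then show ?thesis
      by (simp add: mod_add_left_eq)
  qed
  have "inj_on (\<lambda>d. (j + d) mod m) {..<k}"
  proof (rule inj_onI)
    fix d e
    assume "d \<in> {..<k}" "e \<in> {..<k}" and eq: "(j + d) mod m = (j + e) mod m"
    then have "d < m" "e < m"
      using assms(1) by auto
    have "d = ((j + d) mod m + (m - j)) mod m"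
      using recover[OF \<open>d < m\<close>] .
    also have "\<dots> = ((j + e) mod m + (m - j)) mod m"
      using eq by (simp only:)
    also have "\<dots> = e"
      using recover[OF \<open>e < m\<close>] by simp
    finally show "d = e" .
  qed
  then show ?thesis
    unfolding cyclic_window_def by (simp add: card_image)
qed

text \<open>The agent \<open>j < m\<close> whose window contains \<open>g\<close> at offset \<open>d\<close> is \<open>(g + m - d) mod m\<close>.\<close>

lemma card_windows_containing:
  assumes "k \<le> m"
  shows "card {j. j < m \<and> g \<in> cyclic_window m k j} \<le> k"
proof -
  have "{j. j < m \<and> g \<in> cyclic_window m k j} \<subseteq> (\<lambda>d. (g + (m - d)) mod m) ` {..<k}"
  proof
    fix j
    assume "j \<in> {j. j < m \<and> g \<in> cyclic_window m k j}"
    then obtain d where "j < m" "d < k" and g: "g = (j + d) mod m"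
      unfolding cyclic_window_def by auto
    then have "j + d + (m - d) = j + m"
      using assms by simp
    then have "j = (j + d + (m - d)) mod m"
      using \<open>j < m\<close> by simp
    also have "\<dots> = (g + (m - d)) mod m"
      using g by (simp add: mod_add_left_eq)
    finally show "j \<in> (\<lambda>d. (g + (m - d)) mod m) ` {..<k}"
      using \<open>d < k\<close> by blast
  qed
  then have "card {j. j < m \<and> g \<in> cyclic_window m k j} \<le> card ((\<lambda>d. (g + (m - d)) mod m) ` {..<k})"
    by (intro card_mono) auto
  also have "\<dots> \<le> k"
    using card_image_le[of "{..<k}"] by simp
  finally show ?thesis .
qed

lemma mms_cyclic_window_pos:
  assumes "1 \<le> k" and "k \<le> m" and "j < m"
  shows "0 < mms k (\<lambda>g. g \<in> cyclic_window m k j) {..<m}"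
proof (rule mms_pos_of_k_liked)
  have "{g \<in> {..<m}. g \<in> cyclic_window m k j} = cyclic_window m k j"
    using cyclic_window_subset[of m k j] assms by auto
  then show "k \<le> bval (\<lambda>g. g \<in> cyclic_window m k j) {..<m}"
    unfolding bval_def using assms by (simp add: card_cyclic_window)
qed (use assms in auto)

theorem mainTheorem14:
  fixes k :: nat and h :: real
  assumes "k \<ge> 2" and "h > real k / (2 * real k - 1)"
  shows "\<exists>(G :: nat set) (n :: nat \<Rightarrow> nat) (u :: nat \<Rightarrow> nat \<Rightarrow> nat \<Rightarrow> bool).
           finite G \<and> (\<forall>i<k. n i \<ge> 1) \<and>
           \<not> (\<exists>p. is_partition k G p \<and> democratic_fair h k G n u p)"
proof -
  define m where "m = 2 * k - 1"
  have km: "1 \<le> k" "k \<le> m" "m < 2 * k"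
    using assms(1) unfolding m_def by auto
  have hm: "real k < h * real m"
    using assms km unfolding m_def by (simp add: of_nat_diff pos_divide_less_eq mult.commute)
  define u :: "nat \<Rightarrow> nat \<Rightarrow> nat \<Rightarrow> bool" where "u i j g = (g \<in> cyclic_window m k j)" for i j g
  have "\<not> democratic_fair h k {..<m} (\<lambda>_. m) u p" if p: "is_partition k {..<m} p" for p
  proof
    assume fair: "democratic_fair h k {..<m} (\<lambda>_. m) u p"
    obtain i g where i: "i < k" and g: "part {..<m} p i \<subseteq> {g}"
      using partition_has_small_part[of "{..<m}" k p] p km by auto
    have "0 < mms k (u i j) {..<m}" if "j < m" for j
      unfolding u_def using km(1,2) that by (rule mms_cyclic_window_pos)
    with g have "{j. j < m \<and> pos_mms_fair k {..<m} (u i j) p i} \<subseteq> {j. j < m \<and> u i j g}"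
      by (intro fair_agents_like_only_good) auto
    then have "card {j. j < m \<and> pos_mms_fair k {..<m} (u i j) p i} \<le> card {j. j < m \<and> u i j g}"
      by (intro card_mono) auto
    also have "\<dots> \<le> k"
      unfolding u_def using km by (intro card_windows_containing)
    finally have "real (card {j. j < m \<and> pos_mms_fair k {..<m} (u i j) p i}) \<le> real k"
      by linarith
    moreover have "h * real m \<le> real (card {j. j < m \<and> pos_mms_fair k {..<m} (u i j) p i})"
      using fair i unfolding democratic_fair_def by auto
    ultimately show False
      using hm by linarith
  qed
  then show ?thesis
    using km by (intro exI[of _ "{..<m}"] exI[of _ "\<lambda>_. m"] exI[of _ u]) auto
qed

end
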